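(* Under the model below, for all times $t\ge 0$ and every user $k$, $$\hat Q_k(t) - Q_k(t) \le 2M-1,$$ where $Q_k(t)$ and $\hat Q_k(t)$ are the queue lengths of user $k$ at time $t$, measured in packets, under GPS and MPGPS respectively.
   Context: Model. There are $K$ users (sessions) with separate FIFO queues, and $N$ servers (subcarriers), each transmitting $r$ bits per unit time, so the total service rate is $Nr$. All packets have the same length $L$ bits. Transmissions are error free. The same packet arrival sequence is fed to two systems, starting empty at time $0$. GPS (generalized processor sharing): a fluid system of total rate $Nr$; each user $k$ has a weight $\phi_k>0$, and at every instant each backlogged user $k$ is served at rate $Nr\,\phi_k/\sum_{j\in B}\phi_j$, where $B$ is the set of currently backlogged users. MPGPS (multi-server packetized GPS) with parameter $M\ge 1$: it is work conserving (servers are never idle while packets are queued). Whenever the servers become idle at a time $\tau$, among all packets queued at $\tau$ it selects the $\min\big(M,\sum_{k}\hat Q_k(\tau)\big)$ packets that would be the first to complete service in the corresponding GPS system if no further packets arrived after $\tau$. These selected packets form one batch; a batch of $M_h$ packets is transmitted jointly over all $N$ servers at aggregate rate $Nr$, occupying the servers for $M_hL/(Nr)$ time units. *)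

theory Defs
  imports "HOL-Analysis.Analysis"
begin

text \<open>The arrival process is given by counting
functions: A k t = number of packets of user k that have arrived in [0,t].
Packets of user k are indexed 0,1,2,... in FIFO (arrival) order.\<close>

definition valid_arrivals :: "nat \<Rightarrow> (nat \<Rightarrow> real \<Rightarrow> nat) \<Rightarrow> bool" where
  "valid_arrivals K A \<longleftrightarrow>
     (\<forall>k<K. mono (A k) \<and> (\<forall>t<0. A k t = 0) \<and>
        (\<forall>t. \<exists>e>0. \<forall>s. t \<le> s \<and> s < t + e \<longrightarrow> A k s = A k t))"

text \<open>GPS fluid system: S k t = cumulative number of bits of user k served by time t.\<close>

definition gps_backlogged ::
  "nat \<Rightarrow> real \<Rightarrow> (nat \<Rightarrow> real \<Rightarrow> nat) \<Rightarrow> (nat \<Rightarrow> real \<Rightarrow> real) \<Rightarrow> real \<Rightarrow> nat set" where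
  "gps_backlogged K L A S s = {j. j < K \<and> S j s < L * real (A j s)}"

definition gps_rate ::
  "nat \<Rightarrow> nat \<Rightarrow> real \<Rightarrow> (nat \<Rightarrow> real) \<Rightarrow> real \<Rightarrow> (nat \<Rightarrow> real \<Rightarrow> nat) \<Rightarrow>
   (nat \<Rightarrow> real \<Rightarrow> real) \<Rightarrow> nat \<Rightarrow> real \<Rightarrow> real" where
  "gps_rate K N r \<phi> L A S k s =
     (if k \<in> gps_backlogged K L A S s
      then real N * r * \<phi> k / (\<Sum>j\<in>gps_backlogged K L A S s. \<phi> j)
      else 0)"

definition is_gps ::
  "nat \<Rightarrow> nat \<Rightarrow> real \<Rightarrow> (nat \<Rightarrow> real) \<Rightarrow> real \<Rightarrow> (nat \<Rightarrow> real \<Rightarrow> nat) \<Rightarrow>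
   (nat \<Rightarrow> real \<Rightarrow> real) \<Rightarrow> bool" where
  "is_gps K N r \<phi> L A S \<longleftrightarrow>
     (\<forall>k<K. \<forall>t\<ge>0. (gps_rate K N r \<phi> L A S k has_integral S k t) {0..t})"

definition truncate_arrivals :: "(nat \<Rightarrow> real \<Rightarrow> nat) \<Rightarrow> real \<Rightarrow> nat \<Rightarrow> real \<Rightarrow> nat" where
  "truncate_arrivals A \<tau> = (\<lambda>k t. A k (min t \<tau>))"

definition gps_finish :: "real \<Rightarrow> (nat \<Rightarrow> real \<Rightarrow> real) \<Rightarrow> nat \<Rightarrow> nat \<Rightarrow> real" where
  "gps_finish L S k j = Inf {t. 0 \<le> t \<and> real (Suc j) * L \<le> S k t}"

definition gps_queue ::
  "real \<Rightarrow> (nat \<Rightarrow> real \<Rightarrow> nat) \<Rightarrow> (nat \<Rightarrow> real \<Rightarrow> real) \<Rightarrow> nat \<Rightarrow> real \<Rightarrow> int" where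
  "gps_queue L A S k t = int (A k t) - \<lfloor>S k t / L\<rfloor>"

text \<open>MPGPS schedule: batch h starts at time tau h and contains b h k packets of
user k (the head-of-line packets of user k's FIFO queue).\<close>

definition served_before :: "(nat \<Rightarrow> nat \<Rightarrow> nat) \<Rightarrow> nat \<Rightarrow> nat \<Rightarrow> nat" where
  "served_before b h k = (\<Sum>i<h. b i k)"

definition batch_end ::
  "nat \<Rightarrow> nat \<Rightarrow> real \<Rightarrow> real \<Rightarrow> (nat \<Rightarrow> real) \<Rightarrow> (nat \<Rightarrow> nat \<Rightarrow> nat) \<Rightarrow> nat \<Rightarrow> real" where
  "batch_end K N r L \<tau> b h = \<tau> h + real (\<Sum>k<K. b h k) * L / (real N * r)"

definition is_mpgps ::
  "nat \<Rightarrow> nat \<Rightarrow> real \<Rightarrow> (nat \<Rightarrow> real) \<Rightarrow> real \<Rightarrow> nat \<Rightarrow> (nat \<Rightarrow> real \<Rightarrow> nat) \<Rightarrow>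
   (nat \<Rightarrow> real) \<Rightarrow> (nat \<Rightarrow> nat \<Rightarrow> nat) \<Rightarrow> bool" where
  "is_mpgps K N r \<phi> L M A \<tau> b \<longleftrightarrow>
     \<tau> 0 = 0 \<and> filterlim \<tau> at_top sequentially \<and>
     (\<forall>h.
        (\<forall>k<K. served_before b h k \<le> A k (\<tau> h) \<and>
               b h k \<le> A k (\<tau> h) - served_before b h k) \<and>
        (\<Sum>k<K. b h k) = min M (\<Sum>k<K. A k (\<tau> h) - served_before b h k) \<and>
        batch_end K N r L \<tau> b h \<le> \<tau> (Suc h) \<and>
        (\<forall>t. batch_end K N r L \<tau> b h \<le> t \<and> t < \<tau> (Suc h) \<longrightarrow>
             (\<forall>k<K. A k t \<le> served_before b (Suc h) k)) \<and>
        (\<forall>S'. is_gps K N r \<phi> L (truncate_arrivals A (\<tau> h)) S' \<longrightarrow>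
             (\<forall>k<K. \<forall>j. \<forall>k'<K. \<forall>j'.
                served_before b h k \<le> j \<and> j < served_before b h k + b h k \<and>
                served_before b h k' + b h k' \<le> j' \<and> j' < A k' (\<tau> h) \<longrightarrow>
                gps_finish L S' k j \<le> gps_finish L S' k' j')))"

text \<open>MPGPS queue length of user k at time t, in packets: a packet leaves the
queue when the transmission of its batch is complete.\<close>
definition mpgps_queue ::
  "nat \<Rightarrow> nat \<Rightarrow> real \<Rightarrow> real \<Rightarrow> (nat \<Rightarrow> real \<Rightarrow> nat) \<Rightarrow> (nat \<Rightarrow> real) \<Rightarrow>
   (nat \<Rightarrow> nat \<Rightarrow> nat) \<Rightarrow> nat \<Rightarrow> real \<Rightarrow> int" where
  "mpgps_queue K N r L A \<tau> b k t =
     int (A k t) - int (\<Sum>h\<in>{h. batch_end K N r L \<tau> b h \<le> t}. b h k)"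

end

theory Submission
  imports Defs
begin

text \<open>Let t lie in the transmission of batch H, so that MPGPS has completed sb H k packets
  of user k, and suppose GPS had completed sb H k + 2M of them. Let T be the time at which GPS
  completes packet sb H k, and go back to the start c of the longest run of batches
  c, ..., H-1 that are transmitted back to back and whose packets GPS has all completed by T.
  Together with packet sb H k these are X + 1 packets, X the size of the run, and none of
  them had arrived at the start of batch c (if the servers were idle just before it) or of
  batch c-1 (otherwise). In the second case batch c-1 contains a packet that GPS completes
  only after T; MPGPS preferred it to every other queued packet, so it finishes first in GPS
  without further arrivals, hence also in GPS itself, and no packet of our set was queued.
  So GPS needs time (X+1)L/(Nr) after that start, MPGPS finishes batch H at most
  (X+2M)L/(Nr) after it, and GPS serves 2M-1 more packets of user k between T and t, which
  forces batch H to end before t.\<close>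

section \<open>The GPS fluid system\<close>

locale gps_system =
  fixes K N :: nat and r L :: real and \<phi> :: "nat \<Rightarrow> real"
    and A :: "nat \<Rightarrow> real \<Rightarrow> nat" and S :: "nat \<Rightarrow> real \<Rightarrow> real"
  assumes N_ge_1: "N \<ge> 1" and r_pos: "r > 0" and L_pos: "L > 0"
    and weight_pos: "\<And>j. j < K \<Longrightarrow> \<phi> j > 0"
    and mono_arrivals: "\<And>k. k < K \<Longrightarrow> mono (A k)"
    and gps: "is_gps K N r \<phi> L A S"
begin

abbreviation "C \<equiv> real N * r"
abbreviation "rate k \<equiv> gps_rate K N r \<phi> L A S k"
abbreviation "backlogged s \<equiv> gps_backlogged K L A S s"

definition gps_done :: "real \<Rightarrow> nat \<Rightarrow> nat \<Rightarrow> bool" where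
  "gps_done T k i \<longleftrightarrow> real (Suc i) * L \<le> S k T"

lemma C_pos: "C > 0"
  using N_ge_1 r_pos by simp

lemma backlogged_subset: "backlogged s \<subseteq> {..<K}"
  by (auto simp: gps_backlogged_def)

lemma sum_weights_backlogged_pos:
  assumes "k \<in> backlogged s" shows "(\<Sum>j\<in>backlogged s. \<phi> j) > 0"
proof (rule sum_pos2[OF _ assms])
  show "finite (backlogged s)"
    using backlogged_subset finite_subset by blast
qed (use assms backlogged_subset weight_pos in \<open>auto intro: less_imp_le\<close>)

lemma rate_nonneg: "rate k s \<ge> 0"
proof (cases "k \<in> backlogged s")
  case True
  then have "k < K" using backlogged_subset by auto
  then show ?thesis using sum_weights_backlogged_pos[OF True] C_pos weight_pos[of k] True
    by (auto simp: gps_rate_def intro!: divide_nonneg_pos)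
qed (simp add: gps_rate_def)

lemma sum_rate_le: "(\<Sum>k<K. rate k s) \<le> C"
proof -
  have "(\<Sum>k<K. rate k s) = (\<Sum>k\<in>backlogged s. rate k s)"
    by (rule sum.mono_neutral_right) (use backlogged_subset in \<open>auto simp: gps_rate_def\<close>)
  also have "\<dots> = C * (\<Sum>k\<in>backlogged s. \<phi> k) / (\<Sum>j\<in>backlogged s. \<phi> j)"
    by (simp add: gps_rate_def sum_divide_distrib[symmetric] sum_distrib_left)
  also have "\<dots> \<le> C"
    using sum_weights_backlogged_pos[of _ s] C_pos by (cases "backlogged s = {}") auto
  finally show ?thesis .
qed

lemma S_has_integral: "k < K \<Longrightarrow> 0 \<le> t \<Longrightarrow> (rate k has_integral S k t) {0..t}"
  using gps by (auto simp: is_gps_def)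

lemma S_0: "k < K \<Longrightarrow> S k 0 = 0"
  using S_has_integral[of k 0] integral_unique[of "rate k" "S k 0" "{0..0}"] by simp

lemma S_increment_has_integral:
  assumes "k < K" "0 \<le> s" "s \<le> t"
  shows "(rate k has_integral (S k t - S k s)) {s..t}"
proof -
  have int: "rate k integrable_on {s..t}"
    by (rule integrable_subinterval_real[OF has_integral_integrable[OF S_has_integral[of k t]]])
       (use assms in auto)
  have "integral {0..s} (rate k) + integral {s..t} (rate k) = integral {0..t} (rate k)"
    using Henstock_Kurzweil_Integration.integral_combine[where f="rate k" and a=0 and c=s and b=t]
      has_integral_integrable[OF S_has_integral[of k t]] assms by auto
  then have "integral {s..t} (rate k) = S k t - S k s"
    using integral_unique[OF S_has_integral[of k s]] integral_unique[OF S_has_integral[of k t]]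
      assms by auto
  then show ?thesis using int by (metis integrable_integral)
qed

lemma S_mono: assumes "k < K" "0 \<le> s" "s \<le> t" shows "S k s \<le> S k t"
  using has_integral_le[OF has_integral_0 S_increment_has_integral[OF assms]] rate_nonneg by auto

lemma sum_S_increment_le:
  assumes "0 \<le> s" "s \<le> t"
  shows "(\<Sum>k<K. S k t - S k s) \<le> C * (t - s)"
proof -
  have "((\<lambda>x. \<Sum>k<K. rate k x) has_integral (\<Sum>k<K. S k t - S k s)) {s..t}"
    by (rule has_integral_sum) (use S_increment_has_integral assms in auto)
  moreover have "((\<lambda>x. C) has_integral C * (t - s)) {s..t}"
    using has_integral_const_real[of C s t] assms by (simp add: mult.commute)
  ultimately show ?thesis
    by (rule has_integral_le) (use sum_rate_le in auto)
qed

lemma S_increment_le: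
  assumes "k < K" "0 \<le> s" "s \<le> t"
  shows "S k t - S k s \<le> C * (t - s)"
proof -
  have "S k t - S k s \<le> (\<Sum>k<K. S k t - S k s)"
    by (rule member_le_sum) (use assms S_mono in auto)
  then show ?thesis using sum_S_increment_le assms(2,3) by fastforce
qed

lemma S_continuous: assumes "k < K" "0 \<le> t" shows "continuous_on {0..t} (S k)"
proof -
  have "continuous_on {0..t} (\<lambda>x. integral {0..x} (rate k))"
    by (rule indefinite_integral_continuous_1) (use S_has_integral assms in blast)
  then show ?thesis
    by (rule continuous_on_cong[THEN iffD1, rotated 2])
       (use S_has_integral assms in \<open>auto dest: integral_unique\<close>)
qed

lemma S_le_arrivals: assumes k: "k < K" and t: "0 \<le> t" shows "S k t \<le> L * real (A k t)"
proof (rule ccontr)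
  assume "\<not> ?thesis"
  then have over: "L * real (A k t) < S k t" by simp
  obtain s where s: "0 \<le> s" "s \<le> t" "S k s = L * real (A k t)"
    using IVT'[of "S k" 0 "L * real (A k t)" t] S_0[OF k] over t S_continuous[OF k t] L_pos
    by auto
  have "rate k x = 0" if "x \<in> {s..t}" for x
  proof -
    have "L * real (A k x) \<le> L * real (A k t)"
      using mono_arrivals[OF k] that L_pos by (auto dest: monoD)
    then have "k \<notin> backlogged x"
      using S_mono[of k s x] that s k by (auto simp: gps_backlogged_def)
    then show ?thesis by (simp add: gps_rate_def)
  qed
  then have "(rate k has_integral 0) {s..t}" by (rule has_integral_is_0)
  then have "S k t - S k s = 0"
    using S_increment_has_integral[OF k s(1,2)] has_integral_unique by blast
  then show False using over s by simp
qed

lemma gps_fairness: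
  assumes a: "a < K" and c: "c < K" and s: "0 \<le> s" "s \<le> t"
    and busy: "\<And>x. x \<in> {s..t} \<Longrightarrow> a \<in> backlogged x"
  shows "(S c t - S c s) / \<phi> c \<le> (S a t - S a s) / \<phi> a"
proof (rule has_integral_le)
  show "((\<lambda>x. rate c x / \<phi> c) has_integral (S c t - S c s) / \<phi> c) {s..t}"
    "((\<lambda>x. rate a x / \<phi> a) has_integral (S a t - S a s) / \<phi> a) {s..t}"
    by (intro has_integral_divide S_increment_has_integral a c s)+
  fix x assume "x \<in> {s..t}"
  then have ax: "a \<in> backlogged x" by (rule busy)
  then have "rate c x / \<phi> c \<le> C / (\<Sum>j\<in>backlogged x. \<phi> j)"
    using weight_pos[OF c] sum_weights_backlogged_pos[OF ax] C_pos
    by (auto simp: gps_rate_def)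
  also have "\<dots> = rate a x / \<phi> a"
    using ax weight_pos[OF a] by (simp add: gps_rate_def)
  finally show "rate c x / \<phi> c \<le> rate a x / \<phi> a" .
qed

lemma gps_done_mono:
  "k < K \<Longrightarrow> 0 \<le> T \<Longrightarrow> T \<le> T' \<Longrightarrow> gps_done T k i \<Longrightarrow> gps_done T' k i"
  unfolding gps_done_def using S_mono by (meson order_trans)

lemma gps_finish_done:
  assumes k: "k < K" and t0: "0 \<le> t0" "gps_done t0 k i"
  shows "0 \<le> gps_finish L S k i \<and> gps_done (gps_finish L S k i) k i"
proof -
  define Z where "Z = {t. 0 \<le> t \<and> gps_done t k i}"
  define Z0 where "Z0 = {0..t0} \<inter> S k -` {real (Suc i) * L..}"
  have "closed Z0"
    unfolding Z0_def
    by (intro continuous_closed_preimage S_continuous k t0 closed_atLeast closed_atLeastAtMost)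
  moreover have "t0 \<in> Z0" using t0 by (simp add: Z0_def gps_done_def)
  moreover have "bdd_below Z0" by (auto simp: Z0_def intro: bdd_belowI[of _ 0])
  ultimately have in_Z0: "Inf Z0 \<in> Z0" and "Inf Z0 \<le> t0"
    by (auto intro: closed_contains_Inf cInf_lower)
  have "Inf Z = Inf Z0"
  proof (rule cInf_eq_minimum)
    show "Inf Z0 \<in> Z" using in_Z0 by (simp add: Z_def Z0_def gps_done_def)
    fix z assume z: "z \<in> Z"
    show "Inf Z0 \<le> z"
    proof (cases "z \<le> t0")
      case True
      then have "z \<in> Z0" using z by (simp add: Z_def Z0_def gps_done_def)
      then show ?thesis using \<open>bdd_below Z0\<close> by (rule cInf_lower)
    qed (use \<open>Inf Z0 \<le> t0\<close> in simp)
  qed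
  then show ?thesis using in_Z0 by (simp add: gps_finish_def Z_def Z0_def gps_done_def)
qed

lemma gps_finish_le_iff:
  assumes k: "k < K" and t0: "0 \<le> t0" "gps_done t0 k i" and T: "0 \<le> T"
  shows "gps_finish L S k i \<le> T \<longleftrightarrow> gps_done T k i"
proof
  assume "gps_finish L S k i \<le> T"
  then show "gps_done T k i" using gps_finish_done[OF assms(1-3)] gps_done_mono[OF k] by blast
next
  assume "gps_done T k i"
  then show "gps_finish L S k i \<le> T"
    unfolding gps_finish_def gps_done_def using T by (intro cInf_lower) (auto intro: bdd_belowI[of _ 0])
qed

lemma gps_catch_up:
  assumes q: "q < K" and x: "x < K" and s: "0 \<le> s" "s \<le> T"
    and arrived: "Suc i \<le> A q s"
    and ahead: "(real (Suc i) * L - S q s) / \<phi> q \<le> (S x T - S x s) / \<phi> x"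
  shows "gps_done T q i"
proof (rule ccontr)
  assume undone: "\<not> gps_done T q i"
  have "q \<in> backlogged y" if y: "y \<in> {s..T}" for y
  proof -
    have "real (Suc i) * L \<le> L * real (A q y)"
      using arrived mono_arrivals[OF q] y L_pos by (auto dest!: monoD[of _ s y])
    then show ?thesis
      using undone S_mono[OF q, of y T] y s q by (auto simp: gps_done_def gps_backlogged_def)
  qed
  then have "(S x T - S x s) / \<phi> x \<le> (S q T - S q s) / \<phi> q"
    by (intro gps_fairness q x s)
  then have "(real (Suc i) * L - S q s) / \<phi> q \<le> (S q T - S q s) / \<phi> q"
    using ahead by linarith
  then have "real (Suc i) * L - S q s \<le> S q T - S q s"
    using weight_pos[OF q] by (simp add: divide_le_cancel)
  then show False using undone by (simp add: gps_done_def)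
qed

lemma gps_work_bound:
  assumes T0: "0 \<le> T0" and T: "0 \<le> T" and k0: "k0 < K" "lo k0 < hi k0"
    and before: "\<And>k. k < K \<Longrightarrow> lo k < hi k \<Longrightarrow> S k T0 \<le> L * real (lo k)"
    and finished: "\<And>k i. k < K \<Longrightarrow> lo k \<le> i \<Longrightarrow> i < hi k \<Longrightarrow> gps_done T k i"
  shows "C * T0 + L * real (\<Sum>k<K. hi k - lo k) \<le> C * T"
proof -
  have "T0 \<le> T"
  proof (rule ccontr)
    assume "\<not> T0 \<le> T"
    then have "S k0 T \<le> S k0 T0" using S_mono[OF k0(1) T] by simp
    moreover have "L * real (lo k0) < L * real (hi k0)" using k0(2) L_pos by simp
    moreover have "gps_done T k0 (hi k0 - 1)" by (rule finished) (use k0 in auto)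
    ultimately show False
      using before[OF k0] k0(2) by (simp add: gps_done_def mult.commute of_nat_diff)
  qed
  have per: "L * real (hi k - lo k) \<le> S k T - S k T0" if k: "k < K" for k
  proof (cases "lo k < hi k")
    case True
    have "gps_done T k (hi k - 1)" by (rule finished) (use k True in auto)
    then have "L * real (hi k) \<le> S k T"
      using True by (simp add: gps_done_def mult.commute of_nat_diff)
    then show ?thesis using before[OF k True] True by (simp add: of_nat_diff algebra_simps)
  qed (use S_mono[OF k T0 \<open>T0 \<le> T\<close>] in simp)
  have "L * real (\<Sum>k<K. hi k - lo k) = (\<Sum>k<K. L * real (hi k - lo k))"
    by (simp add: sum_distrib_left)
  also have "\<dots> \<le> (\<Sum>k<K. S k T - S k T0)" by (rule sum_mono) (use per in auto)
  also have "\<dots> \<le> C * (T - T0)" by (rule sum_S_increment_le[OF T0 \<open>T0 \<le> T\<close>])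
  finally show ?thesis by (simp add: algebra_simps)
qed

end

section \<open>GPS without arrivals after a given time\<close>

text \<open>After \<tau>0 the system without further arrivals is a water-filling: at the virtual time v,
  user j has received min (\<phi> j * v) (R j) bits beyond S j \<tau>0, where R j is its backlog at
  \<tau>0 and \<theta> j the virtual time at which it is cleared. Reaching the virtual time v takes the
  real time U v, and V inverts U.\<close>
locale gps_truncation = gps_system +
  fixes \<tau>0 :: real
  assumes \<tau>0_nonneg: "\<tau>0 \<ge> 0"
begin

definition "R k = L * real (A k \<tau>0) - S k \<tau>0"
definition "\<theta> k = R k / \<phi> k"
definition "U v = (\<Sum>j<K. min (\<phi> j * v) (R j)) / C"
definition "\<theta>max = Max (insert 0 (\<theta> ` {..<K}))"
definition "Umax = U \<theta>max"
definition "V u = the_inv_into {0..\<theta>max} U (min (max u 0) Umax)"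

lemma R_nonneg: "k < K \<Longrightarrow> R k \<ge> 0"
  using S_le_arrivals[of k \<tau>0] \<tau>0_nonneg by (simp add: R_def)

lemma \<theta>_le_\<theta>max: "k < K \<Longrightarrow> \<theta> k \<le> \<theta>max"
  unfolding \<theta>max_def by (rule Max_ge) auto

lemma \<theta>max_nonneg: "\<theta>max \<ge> 0"
  unfolding \<theta>max_def by (rule Max_ge) auto

lemma \<theta>max_cases: "\<theta>max = 0 \<or> (\<exists>j<K. \<theta>max = \<theta> j)"
proof -
  have "\<theta>max \<in> insert 0 (\<theta> ` {..<K})" unfolding \<theta>max_def by (rule Max_in) auto
  then show ?thesis by auto
qed

lemma weighted_less_R_iff: "j < K \<Longrightarrow> \<phi> j * v < R j \<longleftrightarrow> v < \<theta> j"
  using weight_pos[of j] by (simp add: \<theta>_def pos_less_divide_eq mult.commute)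

lemma weighted_le_R_iff: "j < K \<Longrightarrow> \<phi> j * v \<le> R j \<longleftrightarrow> v \<le> \<theta> j"
  using weight_pos[of j] by (simp add: \<theta>_def pos_le_divide_eq mult.commute)

lemma U_mono: "v \<le> v' \<Longrightarrow> U v \<le> U v'"
  unfolding U_def using C_pos weight_pos
  by (intro divide_right_mono sum_mono min.mono mult_left_mono) (auto intro: less_imp_le)

lemma U_0: "U 0 = 0"
  unfolding U_def using R_nonneg by (simp add: min_def)

lemma U_strict_mono: assumes "0 \<le> v" "v < v'" "v' \<le> \<theta>max" shows "U v < U v'"
proof -
  obtain j where j: "j < K" "\<theta>max = \<theta> j" using \<theta>max_cases assms by auto
  have "(\<Sum>j<K. min (\<phi> j * v) (R j)) < (\<Sum>j<K. min (\<phi> j * v') (R j))"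
  proof (rule sum_strict_mono_ex1)
    show "\<forall>i\<in>{..<K}. min (\<phi> i * v) (R i) \<le> min (\<phi> i * v') (R i)"
      by (intro ballI min.mono mult_left_mono) (use assms weight_pos in \<open>auto intro: less_imp_le\<close>)
    have "\<phi> j * v < R j" "\<phi> j * v' \<le> R j" "\<phi> j * v < \<phi> j * v'"
      using weighted_less_R_iff[OF j(1)] weighted_le_R_iff[OF j(1)] weight_pos[OF j(1)] assms j
      by auto
    then have "min (\<phi> j * v) (R j) < min (\<phi> j * v') (R j)" by simp
    then show "\<exists>i\<in>{..<K}. min (\<phi> i * v) (R i) < min (\<phi> i * v') (R i)"
      using j(1) by blast
  qed simp
  then show ?thesis unfolding U_def using C_pos by (simp add: divide_strict_right_mono)
qed

lemma U_continuous: "continuous_on UNIV U"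
  unfolding U_def by (intro continuous_intros) (use N_ge_1 r_pos in auto)

lemma inj_on_U: "inj_on U {0..\<theta>max}"
proof (rule inj_onI)
  fix x y assume "x \<in> {0..\<theta>max}" "y \<in> {0..\<theta>max}" "U x = U y"
  then show "x = y" using U_strict_mono[of x y] U_strict_mono[of y x]
    by (cases x y rule: linorder_cases) auto
qed

lemma Umax_nonneg: "Umax \<ge> 0"
  using U_0 U_mono[OF \<theta>max_nonneg] by (simp add: Umax_def)

lemma U_image: "U ` {0..\<theta>max} = {0..Umax}"
proof
  show "U ` {0..\<theta>max} \<subseteq> {0..Umax}"
    using U_mono[of 0] U_mono[of _ \<theta>max] U_0 by (auto simp: Umax_def)
  show "{0..Umax} \<subseteq> U ` {0..\<theta>max}"
  proof
    fix y assume "y \<in> {0..Umax}"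
    then obtain x where "0 \<le> x" "x \<le> \<theta>max" "U x = y"
      using IVT'[of U 0 y \<theta>max] U_0 \<theta>max_nonneg continuous_on_subset[OF U_continuous]
      unfolding Umax_def by auto
    then show "y \<in> U ` {0..\<theta>max}" by auto
  qed
qed

lemma clamp_in_U_image: "min (max u 0) Umax \<in> U ` {0..\<theta>max}"
  using U_image Umax_nonneg by auto

lemma V_in: "V u \<in> {0..\<theta>max}"
  unfolding V_def by (rule the_inv_into_into[OF inj_on_U clamp_in_U_image]) auto

lemma U_V: "U (V u) = min (max u 0) Umax"
  unfolding V_def by (rule f_the_inv_into_f[OF inj_on_U clamp_in_U_image])

lemma V_U: assumes "v \<in> {0..\<theta>max}" shows "V (U v) = v"
proof -
  have "U v \<in> {0..Umax}" using assms U_image by blast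
  then have "min (max (U v) 0) Umax = U v" by simp
  then show ?thesis unfolding V_def using the_inv_into_f_f[OF inj_on_U assms] by simp
qed

lemma V_0: "V 0 = 0"
  using V_U[of 0] U_0 \<theta>max_nonneg by simp

lemma V_eq_\<theta>max: "Umax \<le> u \<Longrightarrow> V u = \<theta>max"
  using V_U[of \<theta>max] \<theta>max_nonneg Umax_nonneg by (simp add: V_def Umax_def)

lemma V_continuous: "continuous_on UNIV V"
proof -
  have "continuous_on {0..Umax} (the_inv_into {0..\<theta>max} U)"
    using continuous_on_inv[of "{0..\<theta>max}" U] continuous_on_subset[OF U_continuous]
      the_inv_into_f_f[OF inj_on_U] U_image by auto
  moreover have "continuous_on UNIV (\<lambda>u. min (max u 0) Umax)"
    by (intro continuous_intros)
  moreover have "range (\<lambda>u. min (max u 0) Umax) \<subseteq> {0..Umax}"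
    using Umax_nonneg by auto
  ultimately show ?thesis
    unfolding V_def by (rule continuous_on_compose2)
qed

lemma le_V_iff: assumes v: "v \<in> {0..\<theta>max}" shows "v \<le> V u \<longleftrightarrow> U v \<le> min (max u 0) Umax"
proof
  assume "v \<le> V u"
  then show "U v \<le> min (max u 0) Umax" using U_mono U_V by metis
next
  assume "U v \<le> min (max u 0) Umax"
  then show "v \<le> V u"
    using U_strict_mono[of "V u" v] V_in[of u] v U_V[of u] by force
qed

lemma U_has_derivative:
  assumes v: "v \<notin> \<theta> ` {..<K}"
  shows "(U has_field_derivative (\<Sum>j\<in>{j\<in>{..<K}. v < \<theta> j}. \<phi> j) / C) (at v)"
proof -
  have piece: "((\<lambda>x. min (\<phi> j * x) (R j)) has_field_derivative (if v < \<theta> j then \<phi> j else 0)) (at v)"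
    if j: "j < K" for j
  proof (cases "v < \<theta> j")
    case True
    have "((\<lambda>x. min (\<phi> j * x) (R j)) has_field_derivative \<phi> j) (at v)"
      by (rule has_field_derivative_transform_within_open[OF DERIV_cmult_Id, of "{..<\<theta> j}"])
         (use True in \<open>auto simp: min_def weighted_le_R_iff[OF j]\<close>)
    then show ?thesis using True by simp
  next
    case False
    then have "\<theta> j < v" using v j by (auto simp: not_less order.order_iff_strict)
    then have "((\<lambda>x. min (\<phi> j * x) (R j)) has_field_derivative 0) (at v)"
      by (intro has_field_derivative_transform_within_open[OF DERIV_const, of "{\<theta> j<..}"])
         (auto simp: min_def weighted_le_R_iff[OF j])
    then show ?thesis using False by simp
  qed
  have "((\<lambda>x. (\<Sum>j<K. min (\<phi> j * x) (R j)) / C) has_field_derivative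
          (\<Sum>j<K. if v < \<theta> j then \<phi> j else 0) / C) (at v)"
    by (intro DERIV_cdivide DERIV_sum piece) simp
  moreover have "(\<Sum>j<K. if v < \<theta> j then \<phi> j else 0) = (\<Sum>j\<in>{j\<in>{..<K}. v < \<theta> j}. \<phi> j)"
    using sum.inter_filter[of "{..<K}" \<phi> "\<lambda>j. v < \<theta> j"] by simp
  ultimately show ?thesis unfolding U_def[abs_def] by simp
qed

lemma V_has_derivative:
  assumes u: "0 < u" "u < Umax" and generic: "V u \<notin> \<theta> ` {..<K}"
  shows "(V has_field_derivative C / (\<Sum>j\<in>{j\<in>{..<K}. V u < \<theta> j}. \<phi> j)) (at u)"
proof -
  let ?P = "{j\<in>{..<K}. V u < \<theta> j}"
  have "V u \<noteq> \<theta>max" using U_V[of u] u by (auto simp: Umax_def)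
  then have below: "V u < \<theta>max" using V_in[of u] by auto
  then obtain j where j: "j < K" "\<theta>max = \<theta> j" using \<theta>max_cases V_in[of u] by auto
  have "(\<Sum>j\<in>?P. \<phi> j) > 0"
    by (rule sum_pos2[of ?P j]) (use j below weight_pos in \<open>auto intro: less_imp_le\<close>)
  then have "(V has_field_derivative inverse ((\<Sum>j\<in>?P. \<phi> j) / C)) (at u)"
    using N_ge_1 r_pos U_V u continuous_on_eq_continuous_at[of UNIV V] V_continuous
    by (intro DERIV_inverse_function[where f=U and a=0 and b=Umax] U_has_derivative generic) auto
  then show ?thesis by simp
qed

text \<open>Since V has slope C divided by the weight of the users with V < \<theta> j, this serves each
  user at its GPS rate.\<close>
definition "S_trunc k s =
  (if s \<le> \<tau>0 then S k s else S k \<tau>0 + min (R k) (\<phi> k * V (s - \<tau>0)))"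

abbreviation "A_trunc \<equiv> truncate_arrivals A \<tau>0"
abbreviation "rate_trunc k \<equiv> gps_rate K N r \<phi> L A_trunc S_trunc k"
abbreviation "backlogged_trunc s \<equiv> gps_backlogged K L A_trunc S_trunc s"

lemma S_trunc_after:
  assumes "k < K" "\<tau>0 \<le> s" shows "S_trunc k s = S k \<tau>0 + min (R k) (\<phi> k * V (s - \<tau>0))"
  using assms V_0 R_nonneg by (cases "s = \<tau>0") (auto simp: S_trunc_def)

lemma S_trunc_drained:
  assumes k: "k < K" and s: "\<tau>0 + Umax \<le> s" shows "S_trunc k s = S k \<tau>0 + R k"
proof -
  have "R k = \<phi> k * \<theta> k" using weight_pos[OF k] by (simp add: \<theta>_def)
  also have "\<dots> \<le> \<phi> k * V (s - \<tau>0)"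
    using V_eq_\<theta>max[of "s - \<tau>0"] s \<theta>_le_\<theta>max[OF k] weight_pos[OF k] by simp
  finally show ?thesis using S_trunc_after[OF k] s Umax_nonneg by simp
qed

lemma backlogged_trunc_before: "s \<le> \<tau>0 \<Longrightarrow> backlogged_trunc s = backlogged s"
  by (auto simp: gps_backlogged_def S_trunc_def truncate_arrivals_def)

lemma rate_trunc_before: "s \<le> \<tau>0 \<Longrightarrow> rate_trunc k s = rate k s"
  using backlogged_trunc_before[of s] by (simp add: gps_rate_def)

lemma backlogged_trunc_after:
  assumes s: "\<tau>0 < s" shows "backlogged_trunc s = {j\<in>{..<K}. V (s - \<tau>0) < \<theta> j}"
proof -
  have "j \<in> backlogged_trunc s \<longleftrightarrow> V (s - \<tau>0) < \<theta> j" if j: "j < K" for j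
  proof -
    have "j \<in> backlogged_trunc s \<longleftrightarrow> S j \<tau>0 + min (R j) (\<phi> j * V (s - \<tau>0)) < L * real (A j \<tau>0)"
      using s j by (simp add: gps_backlogged_def S_trunc_def truncate_arrivals_def)
    also have "\<dots> \<longleftrightarrow> min (R j) (\<phi> j * V (s - \<tau>0)) < R j"
      unfolding R_def by linarith
    also have "\<dots> \<longleftrightarrow> V (s - \<tau>0) < \<theta> j"
      using weighted_less_R_iff[OF j, of "V (s - \<tau>0)"] by linarith
    finally show ?thesis .
  qed
  then show ?thesis by (auto simp: gps_backlogged_def)
qed

lemma V_shift_continuous: "continuous_on UNIV (\<lambda>x. V (x - \<tau>0))"
  by (rule continuous_on_compose2[OF V_continuous]) (auto intro!: continuous_intros)

lemma S_trunc_has_derivative_drained: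
  assumes k: "k < K" and s: "\<tau>0 + Umax < s"
  shows "(S_trunc k has_field_derivative rate_trunc k s) (at s)"
proof -
  have "backlogged_trunc s = {}"
    using backlogged_trunc_after[of s] V_eq_\<theta>max[of "s - \<tau>0"] \<theta>_le_\<theta>max s Umax_nonneg
    by force
  then have "rate_trunc k s = 0" by (simp add: gps_rate_def)
  moreover have "(S_trunc k has_field_derivative 0) (at s)"
    by (rule has_field_derivative_transform_within_open[OF DERIV_const, of "{\<tau>0 + Umax<..}"])
       (use s S_trunc_drained[OF k] in auto)
  ultimately show ?thesis by simp
qed

lemma S_trunc_has_derivative_cleared:
  assumes k: "k < K" and s: "\<tau>0 < s" and cleared: "\<theta> k < V (s - \<tau>0)"
  shows "(S_trunc k has_field_derivative rate_trunc k s) (at s)"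
proof -
  have "rate_trunc k s = 0"
    using backlogged_trunc_after[OF s] cleared by (simp add: gps_rate_def)
  moreover have "open ({\<tau>0<..} \<inter> {x. \<theta> k < V (x - \<tau>0)})"
    by (intro open_Int open_greaterThan open_Collect_less V_shift_continuous continuous_intros)
  then have "(S_trunc k has_field_derivative 0) (at s)"
  proof (rule has_field_derivative_transform_within_open[OF DERIV_const])
    fix x assume x: "x \<in> {\<tau>0<..} \<inter> {x. \<theta> k < V (x - \<tau>0)}"
    then have "R k \<le> \<phi> k * V (x - \<tau>0)"
      using weighted_less_R_iff[OF k, of "V (x - \<tau>0)"] by auto
    then show "S k \<tau>0 + R k = S_trunc k x" using x by (simp add: S_trunc_def)
  qed (use s cleared in auto)
  ultimately show ?thesis by simp
qed

lemma S_trunc_has_derivative_active: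
  assumes k: "k < K" and u: "0 < s - \<tau>0" "s - \<tau>0 < Umax"
    and generic: "V (s - \<tau>0) \<notin> \<theta> ` {..<K}" and active: "V (s - \<tau>0) < \<theta> k"
  shows "(S_trunc k has_field_derivative rate_trunc k s) (at s)"
proof -
  let ?W = "\<Sum>j\<in>{j\<in>{..<K}. V (s - \<tau>0) < \<theta> j}. \<phi> j"
  have "((\<lambda>x. x - \<tau>0) has_field_derivative 1) (at s)"
    by (auto intro!: derivative_eq_intros)
  from DERIV_chain2[where f=V and g="\<lambda>x. x - \<tau>0", OF V_has_derivative[OF u generic] this]
  have d: "((\<lambda>x. S k \<tau>0 + \<phi> k * V (x - \<tau>0)) has_field_derivative \<phi> k * (C / ?W)) (at s)"
    by (auto intro!: derivative_eq_intros)
  have "open ({\<tau>0<..} \<inter> {x. V (x - \<tau>0) < \<theta> k})"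
    by (intro open_Int open_greaterThan open_Collect_less V_shift_continuous continuous_intros)
  then have "(S_trunc k has_field_derivative \<phi> k * (C / ?W)) (at s)"
  proof (rule has_field_derivative_transform_within_open[OF d])
    fix x assume x: "x \<in> {\<tau>0<..} \<inter> {x. V (x - \<tau>0) < \<theta> k}"
    then have "\<phi> k * V (x - \<tau>0) < R k" using weighted_less_R_iff[OF k] by simp
    then show "S k \<tau>0 + \<phi> k * V (x - \<tau>0) = S_trunc k x" using x by (simp add: S_trunc_def)
  qed (use u active in auto)
  moreover have "rate_trunc k s = \<phi> k * (C / ?W)"
    using backlogged_trunc_after[of s] u active k by (simp add: gps_rate_def)
  ultimately show ?thesis by simp
qed

lemma S_trunc_has_derivative:
  assumes k: "k < K" and s: "\<tau>0 < s"
    and smooth: "s \<notin> insert (\<tau>0 + Umax) ((\<lambda>j. \<tau>0 + U (\<theta> j)) ` {..<K})"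
  shows "(S_trunc k has_field_derivative rate_trunc k s) (at s)"
proof (cases "\<tau>0 + Umax < s")
  case True
  then show ?thesis by (rule S_trunc_has_derivative_drained[OF k])
next
  case False
  then have u: "0 < s - \<tau>0" "s - \<tau>0 < Umax" using s smooth by auto
  then have "U (V (s - \<tau>0)) = s - \<tau>0" using U_V by simp
  then have generic: "V (s - \<tau>0) \<notin> \<theta> ` {..<K}" using smooth by force
  then consider "V (s - \<tau>0) < \<theta> k" | "\<theta> k < V (s - \<tau>0)"
    using k by (cases "V (s - \<tau>0)" "\<theta> k" rule: linorder_cases) auto
  then show ?thesis
  proof cases
    case 1 then show ?thesis by (rule S_trunc_has_derivative_active[OF k u generic])
  next
    case 2 then show ?thesis by (rule S_trunc_has_derivative_cleared[OF k s])
  qed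
qed

lemma S_trunc_continuous: assumes k: "k < K" shows "continuous_on {\<tau>0..t} (S_trunc k)"
proof -
  have "continuous_on {\<tau>0..t} (\<lambda>x. S k \<tau>0 + min (R k) (\<phi> k * V (x - \<tau>0)))"
    by (intro continuous_intros continuous_on_subset[OF V_shift_continuous]) auto
  then show ?thesis
    by (rule continuous_on_cong[THEN iffD1, OF refl, rotated]) (simp add: S_trunc_after[OF k])
qed

lemma S_trunc_has_integral:
  assumes k: "k < K" and t: "0 \<le> t" shows "(rate_trunc k has_integral S_trunc k t) {0..t}"
proof -
  have before: "(rate_trunc k has_integral S_trunc k t') {0..t'}" if "0 \<le> t'" "t' \<le> \<tau>0" for t'
    using has_integral_eq[OF _ S_has_integral[OF k \<open>0 \<le> t'\<close>], of "rate_trunc k"] that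
      rate_trunc_before by (simp add: S_trunc_def)
  show ?thesis
  proof (cases "t \<le> \<tau>0")
    case False
    have "(rate_trunc k has_integral (S_trunc k t - S_trunc k \<tau>0)) {\<tau>0..t}"
    proof (rule fundamental_theorem_of_calculus_interior_strong
        [where S="insert (\<tau>0 + Umax) ((\<lambda>j. \<tau>0 + U (\<theta> j)) ` {..<K})"])
      fix x assume "x \<in> {\<tau>0<..<t} - insert (\<tau>0 + Umax) ((\<lambda>j. \<tau>0 + U (\<theta> j)) ` {..<K})"
      then show "(S_trunc k has_vector_derivative rate_trunc k x) (at x)"
        using S_trunc_has_derivative[OF k] by (simp add: has_real_derivative_iff_has_vector_derivative)
    qed (use False S_trunc_continuous[OF k] in auto)
    from has_integral_combine[OF \<tau>0_nonneg _ before[OF \<tau>0_nonneg order_refl] this]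
    show ?thesis using False by simp
  qed (use before t in auto)
qed

lemma is_gps_S_trunc: "is_gps K N r \<phi> L A_trunc S_trunc"
  unfolding is_gps_def using S_trunc_has_integral by blast

sublocale trunc: gps_system K N r L \<phi> A_trunc S_trunc
proof
  show "mono (A_trunc k)" if "k < K" for k
    unfolding truncate_arrivals_def
    by (rule monoI, rule monoD[OF mono_arrivals[OF that]], linarith)
qed (fact N_ge_1 r_pos L_pos weight_pos is_gps_S_trunc)+

definition "virtual_finish k i = (real (Suc i) * L - S k \<tau>0) / \<phi> k"

lemma virtual_finish_in:
  assumes k: "k < K" and i: "i < A k \<tau>0" and pending: "\<not> gps_done \<tau>0 k i"
  shows "0 < virtual_finish k i" "virtual_finish k i \<le> \<theta> k"
proof -
  show "0 < virtual_finish k i"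
    using pending weight_pos[OF k] by (simp add: virtual_finish_def gps_done_def)
  have "real (Suc i) * L \<le> L * real (A k \<tau>0)"
    using i L_pos by (simp add: mult.commute)
  then show "virtual_finish k i \<le> \<theta> k"
    using weight_pos[OF k] by (simp add: virtual_finish_def \<theta>_def R_def divide_right_mono)
qed

lemma trunc_done_before_iff: "T \<le> \<tau>0 \<Longrightarrow> trunc.gps_done T k i \<longleftrightarrow> gps_done T k i"
  by (simp add: trunc.gps_done_def gps_done_def S_trunc_def)

lemma trunc_done_after_iff:
  assumes k: "k < K" and i: "i < A k \<tau>0" and pending: "\<not> gps_done \<tau>0 k i" and T: "\<tau>0 \<le> T"
  shows "trunc.gps_done T k i \<longleftrightarrow> U (virtual_finish k i) \<le> T - \<tau>0"
proof -
  define v where "v = virtual_finish k i"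
  have v: "v \<in> {0..\<theta>max}" "v \<le> \<theta> k"
    using virtual_finish_in[OF k i pending] \<theta>_le_\<theta>max[OF k] by (auto simp: v_def)
  then have "\<phi> k * v \<le> R k" using weighted_le_R_iff[OF k] by simp
  moreover have "\<phi> k * v = real (Suc i) * L - S k \<tau>0"
    using weight_pos[OF k] by (simp add: v_def virtual_finish_def)
  ultimately have "trunc.gps_done T k i \<longleftrightarrow> \<phi> k * v \<le> \<phi> k * V (T - \<tau>0)"
    unfolding trunc.gps_done_def S_trunc_after[OF k T] by linarith
  also have "\<dots> \<longleftrightarrow> v \<le> V (T - \<tau>0)"
    using weight_pos[OF k] by simp
  also have "\<dots> \<longleftrightarrow> U v \<le> T - \<tau>0"
    using le_V_iff[OF v(1)] U_mono[of v \<theta>max] v T by (auto simp: Umax_def)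
  finally show ?thesis by (simp add: v_def)
qed

lemma trunc_done_at_drain:
  assumes k: "k < K" and i: "i < A k \<tau>0" shows "trunc.gps_done (\<tau>0 + Umax) k i"
proof -
  have "real (Suc i) * L \<le> L * real (A k \<tau>0)"
    using i L_pos by (simp add: mult.commute)
  then show ?thesis
    using S_trunc_drained[OF k] by (simp add: trunc.gps_done_def R_def)
qed

lemma gps_finish_trunc_le_iff:
  assumes k: "k < K" and i: "i < A k \<tau>0" and T: "0 \<le> T"
  shows "gps_finish L S_trunc k i \<le> T \<longleftrightarrow> trunc.gps_done T k i"
  using trunc.gps_finish_le_iff[OF k _ trunc_done_at_drain[OF k i] T] \<tau>0_nonneg Umax_nonneg
  by simp

lemma gps_finish_trunc:
  assumes k: "k < K" and i: "i < A k \<tau>0" and pending: "\<not> gps_done \<tau>0 k i"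
  shows "gps_finish L S_trunc k i = \<tau>0 + U (virtual_finish k i)"
proof -
  have U_pos: "0 < U (virtual_finish k i)"
    using U_strict_mono[of 0] U_0 virtual_finish_in[OF k i pending] \<theta>_le_\<theta>max[OF k] by force
  have iff: "gps_finish L S_trunc k i \<le> T \<longleftrightarrow> \<tau>0 + U (virtual_finish k i) \<le> T" if T: "0 \<le> T" for T
  proof (cases "\<tau>0 \<le> T")
    case True
    then show ?thesis
      using gps_finish_trunc_le_iff[OF k i T] trunc_done_after_iff[OF k i pending] by auto
  next
    case False
    then have "\<not> trunc.gps_done T k i"
      using pending gps_done_mono[OF k T] trunc_done_before_iff by force
    then show ?thesis using gps_finish_trunc_le_iff[OF k i T] False U_pos by auto
  qed
  have "0 \<le> gps_finish L S_trunc k i"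
    using trunc.gps_finish_done[OF k _ trunc_done_at_drain[OF k i]] \<tau>0_nonneg Umax_nonneg by simp
  then show ?thesis
    using iff[of "gps_finish L S_trunc k i"] iff[of "\<tau>0 + U (virtual_finish k i)"] \<tau>0_nonneg U_pos
    by auto
qed

text \<open>Both systems are compared through virtual finish times: the truncated system completes
  the packets present at \<tau>0 in this order, and in the real system a backlogged user never
  falls behind another one in normalized service (gps_catch_up).\<close>
lemma gps_done_if_trunc_finish_le:
  assumes q: "q < K" and x: "x < K" and iq: "iq < A q \<tau>0" and ix: "ix < A x \<tau>0"
    and order: "gps_finish L S_trunc q iq \<le> gps_finish L S_trunc x ix"
    and T: "0 \<le> T" and x_done: "gps_done T x ix"
  shows "gps_done T q iq"
proof (cases "T \<le> \<tau>0")
  case True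
  then show ?thesis
    using order x_done gps_finish_trunc_le_iff[OF q iq T] gps_finish_trunc_le_iff[OF x ix T]
      trunc_done_before_iff by simp
next
  case late: False
  show ?thesis
  proof (cases "gps_done \<tau>0 q iq")
    case True
    then show ?thesis using gps_done_mono[OF q \<tau>0_nonneg] late by simp
  next
    case q_pending: False
    have x_pending: "\<not> gps_done \<tau>0 x ix"
      using order q_pending gps_finish_trunc_le_iff[OF q iq \<tau>0_nonneg]
        gps_finish_trunc_le_iff[OF x ix \<tau>0_nonneg] trunc_done_before_iff by auto
    have "U (virtual_finish q iq) \<le> U (virtual_finish x ix)"
      using order gps_finish_trunc[OF q iq q_pending] gps_finish_trunc[OF x ix x_pending] by simp
    then have "virtual_finish q iq \<le> virtual_finish x ix"
      using U_strict_mono[of "virtual_finish x ix" "virtual_finish q iq"]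
        virtual_finish_in[OF q iq q_pending] virtual_finish_in[OF x ix x_pending]
        \<theta>_le_\<theta>max[OF q] by force
    also have "\<dots> \<le> (S x T - S x \<tau>0) / \<phi> x"
      using x_done weight_pos[OF x] by (simp add: virtual_finish_def gps_done_def divide_right_mono)
    finally show ?thesis
      using gps_catch_up[OF q x \<tau>0_nonneg] late iq by (simp add: virtual_finish_def)
  qed
qed

end

section \<open>The MPGPS schedule\<close>

lemma ex_start_of_run:
  fixes P :: "nat \<Rightarrow> bool"
  shows "\<exists>c\<le>H. (\<forall>i. c \<le> i \<and> i < H \<longrightarrow> P i) \<and> (\<forall>h. c = Suc h \<longrightarrow> \<not> P h)"
proof (induction H)
  case (Suc H)
  show ?case
  proof (cases "P H")
    case True
    from Suc.IH obtain c where "c \<le> H" "\<forall>i. c \<le> i \<and> i < H \<longrightarrow> P i" "\<forall>h. c = Suc h \<longrightarrow> \<not> P h"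
      by blast
    with True show ?thesis by (intro exI[of _ c]) (auto simp: less_Suc_eq)
  next
    case False
    then show ?thesis by (intro exI[of _ "Suc H"]) auto
  qed
qed auto

locale mpgps_system = gps_system +
  fixes M :: nat and \<tau> :: "nat \<Rightarrow> real" and b :: "nat \<Rightarrow> nat \<Rightarrow> nat"
  assumes M_ge_1: "M \<ge> 1" and mpgps: "is_mpgps K N r \<phi> L M A \<tau> b"
begin

abbreviation "sb \<equiv> served_before b"
abbreviation "e \<equiv> batch_end K N r L \<tau> b"

definition "batch_size h = (\<Sum>k<K. b h k)"

lemma served_before_Suc: "sb (Suc h) k = sb h k + b h k"
  by (simp add: served_before_def)

lemma \<tau>_0: "\<tau> 0 = 0"
  using mpgps by (simp add: is_mpgps_def)

lemma batch_within_queue: assumes "k < K" shows "sb (Suc h) k \<le> A k (\<tau> h)"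
proof -
  have "sb h k \<le> A k (\<tau> h)" "b h k \<le> A k (\<tau> h) - sb h k"
    using mpgps assms by (simp_all add: is_mpgps_def)
  then show ?thesis unfolding served_before_Suc by arith
qed

lemma batch_size_le: "batch_size h \<le> M"
  using mpgps by (simp add: is_mpgps_def batch_size_def)

lemma batch_end_le: "e h \<le> \<tau> (Suc h)"
  using mpgps by (simp add: is_mpgps_def)

lemma idle_no_arrivals: "e h \<le> s \<Longrightarrow> s < \<tau> (Suc h) \<Longrightarrow> k < K \<Longrightarrow> A k s \<le> sb (Suc h) k"
  using mpgps unfolding is_mpgps_def by blast

lemma batch_selection:
  assumes "is_gps K N r \<phi> L (truncate_arrivals A (\<tau> h)) S'" "k < K" "k' < K"
    "sb h k \<le> j" "j < sb (Suc h) k" "sb (Suc h) k' \<le> j'" "j' < A k' (\<tau> h)"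
  shows "gps_finish L S' k j \<le> gps_finish L S' k' j'"
  using mpgps assms unfolding is_mpgps_def served_before_Suc by blast

lemma batch_duration: "C * (e h - \<tau> h) = real (batch_size h) * L"
  using N_ge_1 r_pos by (simp add: batch_end_def batch_size_def)

lemma \<tau>_le_batch_end: "\<tau> h \<le> e h"
proof -
  have "real (\<Sum>k<K. b h k) * L / C \<ge> 0" using C_pos L_pos by (simp add: sum_nonneg)
  then show ?thesis by (simp add: batch_end_def)
qed

lemma \<tau>_mono: "h \<le> h' \<Longrightarrow> \<tau> h \<le> \<tau> h'"
  using order_trans[OF \<tau>_le_batch_end batch_end_le] by (rule lift_Suc_mono_le)

lemma \<tau>_nonneg: "\<tau> h \<ge> 0"
  using \<tau>_mono[of 0 h] \<tau>_0 by simp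

lemma batch_end_mono: assumes "h \<le> h'" shows "e h \<le> e h'"
proof (cases "h = h'")
  case False
  then have "e h \<le> \<tau> h'" using assms batch_end_le \<tau>_mono order_trans by (metis Suc_leI le_neq_implies_less)
  then show ?thesis using \<tau>_le_batch_end order_trans by blast
qed simp

lemma served_before_add: "h \<le> h' \<Longrightarrow> sb h' k = sb h k + (\<Sum>i\<in>{h..<h'}. b i k)"
  by (induction h' rule: dec_induct) (simp_all add: served_before_Suc)

lemma served_before_mono: "h \<le> h' \<Longrightarrow> sb h k \<le> sb h' k"
  using served_before_add by simp

lemma sum_served_between:
  assumes "h \<le> h'" shows "(\<Sum>k<K. sb h' k - sb h k) = (\<Sum>i\<in>{h..<h'}. batch_size i)"
proof -
  have "(\<Sum>k<K. sb h' k - sb h k) = (\<Sum>k<K. \<Sum>i\<in>{h..<h'}. b i k)"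
    using served_before_add[OF assms] by simp
  also have "\<dots> = (\<Sum>i\<in>{h..<h'}. batch_size i)"
    unfolding batch_size_def by (rule sum.swap)
  finally show ?thesis .
qed

lemma batch_containing:
  assumes "c \<le> H" "sb c k \<le> i" "i < sb H k"
  shows "\<exists>h. c \<le> h \<and> h < H \<and> sb h k \<le> i \<and> i < sb (Suc h) k"
  using assms
proof (induction H rule: dec_induct)
  case (step n)
  then show ?case by (cases "i < sb n k") (force, auto)
qed simp

lemma back_to_back_duration:
  assumes "c \<le> H" "\<And>i. c \<le> i \<Longrightarrow> i < H \<Longrightarrow> e i = \<tau> (Suc i)"
  shows "C * (\<tau> H - \<tau> c) = real (\<Sum>i\<in>{c..<H}. batch_size i) * L"
  using assms
proof (induction H rule: dec_induct)
  case (step n)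
  have "C * (\<tau> (Suc n) - \<tau> c) = C * (\<tau> n - \<tau> c) + C * (e n - \<tau> n)"
    using step.prems[of n] step.hyps by (simp add: algebra_simps)
  then show ?case
    using step batch_duration[of n] by (simp add: algebra_simps)
qed simp

lemma ex_current_batch: "\<exists>H. {h. e h \<le> t} = {..<H} \<and> t < e H"
proof -
  have "filterlim \<tau> at_top sequentially" using mpgps by (simp add: is_mpgps_def)
  then have "\<forall>\<^sub>F h in sequentially. t < \<tau> h" by (simp add: filterlim_at_top_dense)
  then obtain h0 where "t < \<tau> h0" by (auto simp: eventually_sequentially)
  then have ex: "\<exists>h. t < e h" using \<tau>_le_batch_end order_less_le_trans by blast
  define H where "H = (LEAST h. t < e h)"
  have "t < e H" unfolding H_def by (rule LeastI_ex[OF ex])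
  moreover have "{h. e h \<le> t} = {..<H}"
  proof (intro set_eqI iffI)
    fix h assume "h \<in> {h. e h \<le> t}"
    then show "h \<in> {..<H}" using batch_end_mono[of H h] \<open>t < e H\<close> by (cases "H \<le> h") auto
  next
    fix h assume "h \<in> {..<H}"
    then show "h \<in> {h. e h \<le> t}" using not_less_Least[of h "\<lambda>h. t < e h"] by (auto simp: H_def)
  qed
  ultimately show ?thesis by blast
qed

definition tight_batch :: "real \<Rightarrow> nat \<Rightarrow> bool" where
  "tight_batch T h \<longleftrightarrow> e h = \<tau> (Suc h) \<and>
     (\<forall>k<K. \<forall>i. sb h k \<le> i \<and> i < sb (Suc h) k \<longrightarrow> gps_done T k i)"

lemma work_bound_after_idle:
  assumes idle: "c = 0 \<or> (\<exists>h. c = Suc h \<and> e h < \<tau> c)"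
    and T: "0 \<le> T" and k0: "k0 < K" "sb c k0 < hi k0"
    and finished: "\<And>k i. k < K \<Longrightarrow> sb c k \<le> i \<Longrightarrow> i < hi k \<Longrightarrow> gps_done T k i"
  shows "C * \<tau> c + L * real (\<Sum>k<K. hi k - sb c k) \<le> C * T"
proof -
  have bound: "C * s + L * real (\<Sum>k<K. hi k - sb c k) \<le> C * T"
    if s: "0 \<le> s" and quiet: "\<And>k. k < K \<Longrightarrow> S k s \<le> L * real (sb c k)" for s
    by (rule gps_work_bound[where lo = "sb c" and hi = hi, OF s T k0]) (use quiet finished in auto)
  from idle show ?thesis
  proof
    assume "c = 0"
    then show ?thesis using bound[of 0] S_0 \<tau>_0 by (simp add: served_before_def)
  next
    assume "\<exists>h. c = Suc h \<and> e h < \<tau> c"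
    then obtain h where h: "c = Suc h" "e h < \<tau> c" by blast
    let ?W = "L * real (\<Sum>k<K. hi k - sb c k)"
    have "\<tau> c \<le> (C * T - ?W) / C"
    proof (rule dense_le_bounded[OF h(2)])
      fix s assume s: "e h < s" "s < \<tau> c"
      have s0: "0 \<le> s" using \<tau>_nonneg[of h] \<tau>_le_batch_end[of h] s by linarith
      have "S k s \<le> L * real (sb c k)" if k: "k < K" for k
      proof -
        have "A k s \<le> sb c k" using idle_no_arrivals[of h s k] h s k by simp
        then have "L * real (A k s) \<le> L * real (sb c k)" using L_pos by simp
        then show ?thesis using S_le_arrivals[OF k s0] by linarith
      qed
      then have "s * C \<le> C * T - ?W" using bound[OF s0] by (simp add: mult.commute)
      then show "s \<le> (C * T - ?W) / C" using C_pos by (simp add: pos_le_divide_eq)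
    qed
    then show ?thesis using C_pos by (simp add: pos_le_divide_eq mult.commute)
  qed
qed

lemma work_bound_after_unfinished_batch:
  assumes q: "q < K" and iq: "sb h q \<le> iq" "iq < sb (Suc h) q" and q_pending: "\<not> gps_done T q iq"
    and T: "0 \<le> T" and k0: "k0 < K" "sb (Suc h) k0 < hi k0"
    and finished: "\<And>k i. k < K \<Longrightarrow> sb (Suc h) k \<le> i \<Longrightarrow> i < hi k \<Longrightarrow> gps_done T k i"
  shows "C * \<tau> h + L * real (\<Sum>k<K. hi k - sb (Suc h) k) \<le> C * T"
proof (rule gps_work_bound[where lo = "sb (Suc h)" and hi = hi, OF \<tau>_nonneg T k0 _ finished])
  interpret tr: gps_truncation K N r L \<phi> A S "\<tau> h"
    by (intro gps_truncation.intro gps_system_axioms gps_truncation_axioms.intro \<tau>_nonneg)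
  fix k assume k: "k < K" "sb (Suc h) k < hi k"
  show "S k (\<tau> h) \<le> L * real (sb (Suc h) k)"
  proof (cases "A k (\<tau> h) \<le> sb (Suc h) k")
    case True
    then have "L * real (A k (\<tau> h)) \<le> L * real (sb (Suc h) k)" using L_pos by simp
    then show ?thesis using S_le_arrivals[OF k(1) \<tau>_nonneg[of h]] by linarith
  next
    case False
    then have queued: "sb (Suc h) k < A k (\<tau> h)" by simp
    then have "gps_finish L tr.S_trunc q iq \<le> gps_finish L tr.S_trunc k (sb (Suc h) k)"
      by (intro batch_selection[OF tr.is_gps_S_trunc q k(1) iq]) auto
    moreover have "iq < A q (\<tau> h)" using iq(2) batch_within_queue[OF q, of h] by simp
    ultimately have "gps_done T q iq"
      using tr.gps_done_if_trunc_finish_le[OF q k(1) _ queued _ T finished[OF k(1) order_refl k(2)]]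
      by blast
    with q_pending show ?thesis by contradiction
  qed
qed

lemma run_start_work_bound:
  assumes start: "\<And>h. c = Suc h \<Longrightarrow> \<not> tight_batch T h"
    and T: "0 \<le> T" and k0: "k0 < K" "sb c k0 < hi k0"
    and finished: "\<And>k i. k < K \<Longrightarrow> sb c k \<le> i \<Longrightarrow> i < hi k \<Longrightarrow> gps_done T k i"
  shows "C * \<tau> c + L * real (\<Sum>k<K. hi k - sb c k) \<le> C * T + real M * L"
proof (cases "c = 0 \<or> (\<exists>h. c = Suc h \<and> e h < \<tau> c)")
  case True
  moreover have "0 \<le> real M * L" using L_pos by simp
  ultimately show ?thesis using work_bound_after_idle[where hi = hi, OF True T k0 finished] by linarith
next
  case False
  then obtain h where h: "c = Suc h" "e h = \<tau> c"
    using batch_end_le by (metis not0_implies_Suc order_less_le)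
  then obtain q iq where q: "q < K" "sb h q \<le> iq" "iq < sb (Suc h) q" "\<not> gps_done T q iq"
    using start by (auto simp: tight_batch_def)
  have "C * \<tau> h + L * real (\<Sum>k<K. hi k - sb c k) \<le> C * T"
    using work_bound_after_unfinished_batch[OF q T] k0 finished h(1) by simp
  moreover have "C * \<tau> c = C * \<tau> h + real (batch_size h) * L"
    using batch_duration[of h] h(2) by (simp add: algebra_simps)
  moreover have "real (batch_size h) * L \<le> real M * L"
    using batch_size_le L_pos by simp
  ultimately show ?thesis by linarith
qed

lemma run_work_bound:
  assumes k: "k < K" and T: "0 \<le> T" "gps_done T k (sb H k)"
    and run: "c \<le> H" "\<And>i. c \<le> i \<Longrightarrow> i < H \<Longrightarrow> tight_batch T i"
    and start: "\<And>h. c = Suc h \<Longrightarrow> \<not> tight_batch T h"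
  shows "C * \<tau> c + L * real (\<Sum>i\<in>{c..<H}. batch_size i) + L \<le> C * T + real M * L"
proof -
  define hi where "hi k' = (if k' = k then Suc (sb H k) else sb H k')" for k'
  have sb_c_le: "sb c k' \<le> sb H k'" for k' using served_before_mono run(1) by blast
  have finished: "gps_done T k' i" if k': "k' < K" and i: "sb c k' \<le> i" "i < hi k'" for k' i
  proof (cases "k' = k \<and> i = sb H k")
    case True
    then show ?thesis using T(2) by simp
  next
    case False
    then have "i < sb H k'" using i by (auto simp: hi_def split: if_splits)
    then obtain h where "c \<le> h" "h < H" "sb h k' \<le> i" "i < sb (Suc h) k'"
      using batch_containing[OF run(1) i(1)] by blast
    then show ?thesis using run(2) k' by (auto simp: tight_batch_def)
  qed
  have k_open: "sb c k < hi k" using sb_c_le[of k] by (simp add: hi_def)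
  have "(\<Sum>k'<K. hi k' - sb c k') = (\<Sum>k'<K. (sb H k' - sb c k') + (if k' = k then 1 else 0))"
    using sb_c_le by (intro sum.cong) (auto simp: hi_def)
  also have "\<dots> = (\<Sum>i\<in>{c..<H}. batch_size i) + 1"
    using k sum_served_between[OF run(1)] by (simp add: sum.distrib)
  finally show ?thesis
    using run_start_work_bound[where c = c and hi = hi, OF start T(1) k k_open finished]
    by (simp add: algebra_simps)
qed

lemma gps_service_bound:
  assumes k: "k < K" and t: "0 \<le> t" and running: "t < e H"
  shows "S k t < real (sb H k + 2 * M) * L"
proof (rule ccontr)
  assume "\<not> ?thesis"
  then have ahead: "real (sb H k) * L + 2 * real M * L \<le> S k t"
    by (simp add: algebra_simps)
  moreover have "L \<le> 2 * real M * L" using M_ge_1 L_pos by simp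
  ultimately have "real (Suc (sb H k)) * L \<le> S k t" by (simp add: algebra_simps)
  then obtain T where T: "0 \<le> T" "T \<le> t" "S k T = real (Suc (sb H k)) * L"
    using IVT'[of "S k" 0 "real (Suc (sb H k)) * L" t] S_0[OF k] S_continuous[OF k t] t L_pos
    by auto
  have late: "C * T + (2 * real M - 1) * L \<le> C * t"
    using S_increment_le[OF k T(1,2)] ahead T(3) by (simp add: algebra_simps)
  obtain c where c: "c \<le> H" "\<And>i. c \<le> i \<Longrightarrow> i < H \<Longrightarrow> tight_batch T i"
    "\<And>h. c = Suc h \<Longrightarrow> \<not> tight_batch T h"
    using ex_start_of_run[of H "tight_batch T"] by blast
  have "gps_done T k (sb H k)" using T(3) by (simp add: gps_done_def)
  from run_work_bound[OF k T(1) this c]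
  have "C * \<tau> c + L * real (\<Sum>i\<in>{c..<H}. batch_size i) + L \<le> C * T + real M * L" .
  moreover have "C * e H = C * \<tau> c + real (\<Sum>i\<in>{c..<H}. batch_size i) * L + real (batch_size H) * L"
    using back_to_back_duration[OF c(1)] c(2) batch_duration[of H]
    by (simp add: tight_batch_def algebra_simps)
  moreover have "real (batch_size H) * L \<le> real M * L"
    using batch_size_le L_pos by simp
  ultimately have "C * e H \<le> C * t"
    using late by (simp add: algebra_simps)
  then show False using running C_pos by (simp add: mult_le_cancel_left_pos)
qed

end

theorem corollary1:
  fixes K N M :: nat and r L :: real and \<phi> :: "nat \<Rightarrow> real"
    and A :: "nat \<Rightarrow> real \<Rightarrow> nat" and S :: "nat \<Rightarrow> real \<Rightarrow> real"
    and \<tau> :: "nat \<Rightarrow> real" and b :: "nat \<Rightarrow> nat \<Rightarrow> nat"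
    and k :: nat and t :: real
  assumes "N \<ge> 1" and "r > 0" and "L > 0" and "M \<ge> 1"
    and "\<forall>j<K. \<phi> j > 0"
    and "valid_arrivals K A"
    and "is_gps K N r \<phi> L A S"
    and "is_mpgps K N r \<phi> L M A \<tau> b"
    and "k < K" and "t \<ge> 0"
  shows "mpgps_queue K N r L A \<tau> b k t - gps_queue L A S k t \<le> 2 * int M - 1"
proof -
  interpret mpgps_system K N r L \<phi> A S M \<tau> b
    using assms by unfold_locales (auto simp: valid_arrivals_def)
  obtain H where H: "{h. e h \<le> t} = {..<H}" "t < e H"
    using ex_current_batch by blast
  have "S k t < real (sb H k + 2 * M) * L"
    using gps_service_bound assms(9,10) H(2) by blast
  then have "\<lfloor>S k t / L\<rfloor> < int (sb H k + 2 * M)"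
    using assms(3) by (simp add: floor_less_iff pos_divide_less_eq)
  moreover have "mpgps_queue K N r L A \<tau> b k t = int (A k t) - int (sb H k)"
    unfolding mpgps_queue_def H(1) served_before_def by simp
  ultimately show ?thesis by (simp add: gps_queue_def)
qed

end
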